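(* There is no effective procedure that, given an index for a computable subtree $T$ of $2^{<\omega}$ of positive measure and a positive rational $q$, produces an index for a computable subtree $S$ of $2^{<\omega}$ of measure at least $q$ together with an $e\in\omega$ such that $\Phi_e^A$ is an infinite path through $T$ for every infinite path $A$ through $S$.
   Context: The measure of a tree $T\subseteq 2^{<\omega}$ is the uniform measure of its set of infinite paths. $\Phi_e$ denotes the $e$-th Turing functional in a standard enumeration. *)

theory Defs
  imports "HOL-Probability.Probability" "HOL-Library.Nat_Bijection"
begin

text \<open>Unary partial recursive function terms over the Cantor pairing
  prod_encode, with an oracle query instruction Orc.  Relative to an
  oracle A :: nat => bool these compute exactly the A-partial-recursive
  functions; with a constant oracle they compute exactly the partial
  recursive functions.\<close>

datatype recf =
    Zf | Sf | Fst | Snd | Orc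
  | Pairf recf recf
  | Comp recf recf
  | Rec recf recf
  | Mu recf

inductive eval :: "(nat \<Rightarrow> bool) \<Rightarrow> recf \<Rightarrow> nat \<Rightarrow> nat \<Rightarrow> bool" where
  zero: "eval A Zf x 0"
| succ: "eval A Sf x (Suc x)"
| fst:  "eval A Fst x (fst (prod_decode x))"
| snd:  "eval A Snd x (snd (prod_decode x))"
| orc:  "eval A Orc x (if A x then 1 else 0)"
| pair: "eval A f x y \<Longrightarrow> eval A g x z \<Longrightarrow> eval A (Pairf f g) x (prod_encode (y, z))"
| comp: "eval A g x y \<Longrightarrow> eval A f y z \<Longrightarrow> eval A (Comp f g) x z"
| rec0: "eval A f x y \<Longrightarrow> eval A (Rec f g) (prod_encode (x, 0)) y"
| recS: "eval A (Rec f g) (prod_encode (x, n)) y \<Longrightarrow>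
         eval A g (prod_encode (x, prod_encode (n, y))) z \<Longrightarrow>
         eval A (Rec f g) (prod_encode (x, Suc n)) z"
| mu:   "eval A f (prod_encode (x, n)) 0 \<Longrightarrow>
         (\<forall>m<n. \<exists>y. y \<noteq> 0 \<and> eval A f (prod_encode (x, m)) y) \<Longrightarrow>
         eval A (Mu f) x n"

definition eval0 :: "recf \<Rightarrow> nat \<Rightarrow> nat \<Rightarrow> bool" where
  "eval0 p x y \<longleftrightarrow> eval (\<lambda>_. False) p x y"

text \<open>Goedel numbering of programs (injective, computable).  The index of
  a program p is enc p; Phi_e is the functional computed by the program with index e.\<close>
primrec enc :: "recf \<Rightarrow> nat" where
  "enc Zf = prod_encode (0, 0)"
| "enc Sf = prod_encode (1, 0)"
| "enc Fst = prod_encode (2, 0)"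
| "enc Snd = prod_encode (3, 0)"
| "enc Orc = prod_encode (4, 0)"
| "enc (Pairf f g) = prod_encode (5, prod_encode (enc f, enc g))"
| "enc (Comp f g) = prod_encode (6, prod_encode (enc f, enc g))"
| "enc (Rec f g) = prod_encode (7, prod_encode (enc f, enc g))"
| "enc (Mu f) = prod_encode (8, enc f)"

primrec scode :: "bool list \<Rightarrow> nat" where
  "scode [] = 0"
| "scode (b # s) = Suc (prod_encode (if b then 1 else 0, scode s))"

definition is_tree :: "bool list set \<Rightarrow> bool" where
  "is_tree T \<longleftrightarrow> (\<forall>s t. s @ t \<in> T \<longrightarrow> s \<in> T)"

text \<open>The program p decides the set of strings T (p is total and 0/1-valued
  with characteristic function of T); so enc p is an index for the computable set T.\<close>
definition decides :: "recf \<Rightarrow> bool list set \<Rightarrow> bool" where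
  "decides p T \<longleftrightarrow> (\<forall>s. eval0 p (scode s) (if s \<in> T then 1 else 0))"

definition paths :: "bool list set \<Rightarrow> (nat \<Rightarrow> bool) set" where
  "paths T = {A. \<forall>n. map A [0..<n] \<in> T}"

definition coin :: "(nat \<Rightarrow> bool) measure" where
  "coin = PiM UNIV (\<lambda>_::nat. measure_pmf (bernoulli_pmf (1/2)))"

definition tree_measure :: "bool list set \<Rightarrow> real" where
  "tree_measure T = measure coin (paths T)"

definition computes_with_oracle :: "recf \<Rightarrow> (nat \<Rightarrow> bool) \<Rightarrow> (nat \<Rightarrow> bool) \<Rightarrow> bool" where
  "computes_with_oracle p A X \<longleftrightarrow> (\<forall>n. eval A p n (if X n then 1 else 0))"

end

theory Submission
  imports Defs
begin

text \<open>Suppose a program F did what the theorem forbids.  By the recursion theorem there is a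
  computable tree T whose index e is known to T itself.  At stage L, T runs F on (e, 3/4) for
  L steps; once F has produced (S, Phi), T asks whether more than a quarter of the strings of
  length L make Phi output some bit b at argument 0 within L steps, and at the first stage where
  this happens it removes every path beginning with b.  Either way T has measure at least 1/2,
  so F succeeds on T.  Then Phi^A(0) is defined for all A in a set of measure at least 3/4,
  so some b has Phi^A(0) = b on a set of measure greater than 1/4, and the stage is eventually
  reached.  But the oracles A with Phi^A(0) = b cannot be paths through S, since those compute
  paths X through T with X(0) \<noteq> b; so S has measure less than 3/4, a contradiction.

  "Running for L steps" is modelled by a search for a certificate -- a derivation of the
  judgement eval A p x y, coded as a number -- among the first L codes, with oracle queries
  answered from a prefix of A of length L.  Checking a certificate is primitive recursive, so
  the whole construction of T is computable.\<close>

lemma eval_deterministic: "eval A p x y \<Longrightarrow> eval A p x y' \<Longrightarrow> y = y'"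
proof (induction arbitrary: y' rule: eval.induct)
  case (pair A f x y g z)
  from pair.prems show ?case
    by (cases rule: eval.cases) (auto dest: pair.IH)
next
  case (comp A g x y f z)
  from comp.prems show ?case
    by (cases rule: eval.cases) (auto dest: comp.IH)
next
  case (rec0 A f x y g)
  from rec0.prems show ?case
    by (cases rule: eval.cases) (auto dest: rec0.IH)
next
  case (recS A f g x n y z)
  from recS.prems show ?case
    by (cases rule: eval.cases) (auto dest: recS.IH)
next
  case (mu A f x n)
  from mu.prems show ?case
  proof (cases rule: eval.cases)
    case mu
    then have zero: "eval A f (prod_encode (x, y')) 0"
      and below: "\<forall>m<y'. \<exists>y. y \<noteq> 0 \<and> eval A f (prod_encode (x, m)) y"
      by auto
    show ?thesis
    proof (rule ccontr)
      assume "n \<noteq> y'"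
      then consider "n < y'" | "y' < n" by linarith
      then show False
      proof cases
        case 1
        with below obtain v where "v \<noteq> 0" "eval A f (prod_encode (x, n)) v" by auto
        with mu.IH(1) show False by auto
      next
        case 2
        with mu.IH(2) obtain v where "v \<noteq> 0" "\<forall>z. eval A f (prod_encode (x, y')) z \<longrightarrow> v = z"
          by auto
        with zero show False by auto
      qed
    qed
  qed
qed (auto elim: eval.cases)

section \<open>Computable total functions\<close>

abbreviation pair :: "nat \<Rightarrow> nat \<Rightarrow> nat" where "pair a b \<equiv> prod_encode (a, b)"

definition pfst :: "nat \<Rightarrow> nat" where "pfst v = fst (prod_decode v)"
definition psnd :: "nat \<Rightarrow> nat" where "psnd v = snd (prod_decode v)"

lemma pfst_pair [simp]: "pfst (pair a b) = a" by (simp add: pfst_def)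
lemma psnd_pair [simp]: "psnd (pair a b) = b" by (simp add: psnd_def)
lemma pair_pfst_psnd [simp]: "pair (pfst v) (psnd v) = v" by (simp add: pfst_def psnd_def)

definition computes :: "recf \<Rightarrow> (nat \<Rightarrow> nat) \<Rightarrow> bool" where
  "computes P f \<longleftrightarrow> (\<forall>A x. eval A P x (f x))"

definition computable :: "(nat \<Rightarrow> nat) \<Rightarrow> bool" where
  "computable f \<longleftrightarrow> (\<exists>P. computes P f)"

lemma computesD: "computes P f \<Longrightarrow> eval A P x (f x)"
  by (simp add: computes_def)

lemma computable_cong:
  assumes "computable f" "\<And>x. f x = g x" shows "computable g"
proof -
  from assms(2) have "f = g" by (rule ext)
  with assms(1) show ?thesis by simp
qed

primrec constp :: "nat \<Rightarrow> recf" where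
  "constp 0 = Zf"
| "constp (Suc n) = Comp Sf (constp n)"

definition IdP :: recf where "IdP = Pairf Fst Snd"

lemma computes_IdP: "computes IdP (\<lambda>z. z)"
  unfolding computes_def IdP_def
proof (intro allI)
  fix A x
  have "eval A (Pairf Fst Snd) x (prod_encode (fst (prod_decode x), snd (prod_decode x)))"
    by (intro eval.intros)
  then show "eval A (Pairf Fst Snd) x x" by simp
qed

lemma computes_constp: "computes (constp n) (\<lambda>z. n)"
  unfolding computes_def by (induction n) (auto intro: eval.intros)

lemma computes_Comp: "computes P f \<Longrightarrow> computes Q g \<Longrightarrow> computes (Comp P Q) (\<lambda>z. f (g z))"
  unfolding computes_def by (blast intro: eval.comp)

lemma computes_Pairf:
  "computes P f \<Longrightarrow> computes Q g \<Longrightarrow> computes (Pairf P Q) (\<lambda>z. pair (f z) (g z))"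
  unfolding computes_def by (auto intro: eval.intros)

lemma computable_id: "computable (\<lambda>z. z)"
  using computes_IdP computable_def by blast

lemma computable_const: "computable (\<lambda>z. n)"
  using computes_constp computable_def by blast

lemma computable_comp: "computable f \<Longrightarrow> computable g \<Longrightarrow> computable (\<lambda>z. f (g z))"
  unfolding computable_def by (blast intro: computes_Comp)

lemma computable_pair:
  "computable f \<Longrightarrow> computable g \<Longrightarrow> computable (\<lambda>z. pair (f z) (g z))"
  unfolding computable_def by (blast intro: computes_Pairf)

lemma computable_pfst:
  assumes "computable g" shows "computable (\<lambda>z. pfst (g z))"
proof -
  have "computes Fst pfst" unfolding computes_def pfst_def by (auto intro: eval.intros)
  with assms show ?thesis using computable_comp computable_def by blast
qed

lemma computable_psnd:
  assumes "computable g" shows "computable (\<lambda>z. psnd (g z))"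
proof -
  have "computes Snd psnd" unfolding computes_def psnd_def by (auto intro: eval.intros)
  with assms show ?thesis using computable_comp computable_def by blast
qed

lemma computable_Suc:
  assumes "computable g" shows "computable (\<lambda>z. Suc (g z))"
proof -
  have "computes Sf Suc" unfolding computes_def by (auto intro: eval.intros)
  with assms show ?thesis using computable_comp computable_def by blast
qed

lemma computable_comp2:
  assumes "computable (\<lambda>v. h (pfst v) (psnd v))" "computable f" "computable g"
  shows "computable (\<lambda>z. h (f z) (g z))"
  using computable_comp[OF assms(1) computable_pair[OF assms(2,3)]] by simp

primrec prim_rec :: "(nat \<Rightarrow> nat) \<Rightarrow> (nat \<Rightarrow> nat) \<Rightarrow> nat \<Rightarrow> nat \<Rightarrow> nat" where
  "prim_rec f g x 0 = f x"
| "prim_rec f g x (Suc n) = g (pair x (pair n (prim_rec f g x n)))"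

lemma computable_prim_rec:
  assumes "computable f" "computable g" "computable h" "computable k"
  shows "computable (\<lambda>z. prim_rec f g (h z) (k z))"
proof -
  obtain P Q where P: "computes P f" and Q: "computes Q g"
    using assms(1,2) computable_def by blast
  have "eval A (Rec P Q) (pair x n) (prim_rec f g x n)" for A x n
    by (induction n) (auto intro: eval.intros computesD[OF P] computesD[OF Q])
  from this[of _ "pfst v" "psnd v" for v]
  have "computes (Rec P Q) (\<lambda>v. prim_rec f g (pfst v) (psnd v))"
    unfolding computes_def by simp
  then show ?thesis
    using computable_comp2 assms(3,4) computable_def by blast
qed

lemma computable_funpow:
  assumes "computable h" "computable f" "computable g"
  shows "computable (\<lambda>z. (h ^^ g z) (f z))"
proof -
  have "prim_rec (\<lambda>x. x) (\<lambda>w. h (psnd (psnd w))) a n = (h ^^ n) a" for a n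
    by (induction n) simp_all
  moreover have "computable (\<lambda>z. prim_rec (\<lambda>x. x) (\<lambda>w. h (psnd (psnd w))) (f z) (g z))"
    by (intro computable_prim_rec computable_comp[OF assms(1)] computable_psnd computable_id
        assms(2,3))
  ultimately show ?thesis by simp
qed

lemma computable_pred:
  assumes "computable g" shows "computable (\<lambda>z. g z - 1)"
proof -
  have "prim_rec (\<lambda>_. 0) (\<lambda>w. pfst (psnd w)) 0 z = z - 1" for z by (cases z) auto
  moreover have "computable (\<lambda>z. prim_rec (\<lambda>_. 0) (\<lambda>w. pfst (psnd w)) 0 z)"
    by (intro computable_prim_rec computable_const computable_pfst computable_psnd computable_id)
  ultimately have "computable (\<lambda>z. z - 1)" by simp
  from computable_comp[OF this assms] show ?thesis .
qed

lemma computable_add: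
  assumes "computable f" "computable g" shows "computable (\<lambda>z. f z + g z)"
proof -
  have "prim_rec (\<lambda>x. x) (\<lambda>w. Suc (psnd (psnd w))) a n = a + n" for a n by (induction n) auto
  moreover have "computable (\<lambda>v. prim_rec (\<lambda>x. x) (\<lambda>w. Suc (psnd (psnd w))) (pfst v) (psnd v))"
    by (intro computable_prim_rec computable_Suc computable_pfst computable_psnd computable_id)
  ultimately have "computable (\<lambda>v. pfst v + psnd v)" by simp
  from computable_comp2[OF this assms] show ?thesis .
qed

lemma computable_diff:
  assumes "computable f" "computable g" shows "computable (\<lambda>z. f z - g z)"
proof -
  have "prim_rec (\<lambda>x. x) (\<lambda>w. psnd (psnd w) - 1) a n = a - n" for a n by (induction n) auto
  moreover have "computable (\<lambda>v. prim_rec (\<lambda>x. x) (\<lambda>w. psnd (psnd w) - 1) (pfst v) (psnd v))"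
    by (intro computable_prim_rec computable_pred computable_pfst computable_psnd computable_id)
  ultimately have "computable (\<lambda>v. pfst v - psnd v)" by simp
  from computable_comp2[OF this assms] show ?thesis .
qed

lemma computable_mult:
  assumes "computable f" "computable g" shows "computable (\<lambda>z. f z * g z)"
proof -
  have "prim_rec (\<lambda>_. 0) (\<lambda>w. psnd (psnd w) + pfst w) a n = a * n" for a n by (induction n) auto
  moreover have "computable (\<lambda>v. prim_rec (\<lambda>_. 0) (\<lambda>w. psnd (psnd w) + pfst w) (pfst v) (psnd v))"
    by (intro computable_prim_rec computable_add computable_const computable_pfst computable_psnd
        computable_id)
  ultimately have "computable (\<lambda>v. pfst v * psnd v)" by simp
  from computable_comp2[OF this assms] show ?thesis .
qed

lemma computable_eq_0:
  assumes "computable g" shows "computable (\<lambda>z. of_bool (g z = 0))"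
proof -
  have "prim_rec (\<lambda>_. 1) (\<lambda>_. 0) 0 z = of_bool (z = 0)" for z by (cases z) auto
  moreover have "computable (\<lambda>z. prim_rec (\<lambda>_. 1) (\<lambda>_. 0) 0 z)"
    by (intro computable_prim_rec computable_const computable_id)
  ultimately have "computable (\<lambda>z. of_bool (z = 0))" by simp
  from computable_comp[OF this assms] show ?thesis .
qed

lemma computable_eq:
  assumes "computable f" "computable g" shows "computable (\<lambda>z. of_bool (f z = g z))"
  using computable_eq_0[OF computable_add[OF computable_diff[OF assms]
      computable_diff[OF assms(2,1)]]]
  by (rule computable_cong) auto

lemma computable_less:
  assumes "computable f" "computable g" shows "computable (\<lambda>z. of_bool (f z < g z))"
  using computable_eq_0[OF computable_eq_0[OF computable_diff[OF assms(2,1)]]]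
  by (rule computable_cong) auto

lemma computable_not:
  assumes "computable (\<lambda>z. of_bool (a z))" shows "computable (\<lambda>z. of_bool (\<not> a z))"
  using computable_eq_0[OF assms] by (rule computable_cong) auto

lemma computable_conj:
  assumes "computable (\<lambda>z. of_bool (a z))" "computable (\<lambda>z. of_bool (b z))"
  shows "computable (\<lambda>z. of_bool (a z \<and> b z))"
  using computable_mult[OF assms] by (rule computable_cong) auto

lemma computable_disj:
  assumes "computable (\<lambda>z. of_bool (a z))" "computable (\<lambda>z. of_bool (b z))"
  shows "computable (\<lambda>z. of_bool (a z \<or> b z))"
  using computable_eq_0[OF computable_eq_0[OF computable_add[OF assms]]]
  by (rule computable_cong) auto

lemma computable_if:
  assumes "computable (\<lambda>z. of_bool (b z))" "computable f" "computable g"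
  shows "computable (\<lambda>z. if b z then f z else g z)"
proof -
  \<comment> \<open>a recursion of depth of_bool (b z) selects a component of the pair\<close>
  have "computable (\<lambda>z. prim_rec psnd (\<lambda>w. pfst (pfst w)) (pair (f z) (g z)) (of_bool (b z)))"
    by (intro computable_prim_rec computable_pfst computable_psnd computable_pair computable_id
        assms)
  then show ?thesis by (rule computable_cong) simp
qed

lemmas computable_intros = computable_disj computable_conj computable_not computable_eq
  computable_less computable_if computable_pair computable_Suc computable_diff computable_add
  computable_mult computable_pfst computable_psnd computable_id computable_const

lemma computable_card_less:
  assumes "computable (\<lambda>u. of_bool (p (pfst u) (psnd u)))" "computable f" "computable g"
  shows "computable (\<lambda>z. card {j. j < g z \<and> p (f z) j})"
proof -
  have "prim_rec (\<lambda>_. 0) (\<lambda>w. psnd (psnd w) + of_bool (p (pfst w) (pfst (psnd w)))) x n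
      = card {j. j < n \<and> p x j}" for x n
  proof (induction n)
    case (Suc n)
    have "{j. j < Suc n \<and> p x j} = {j. j < n \<and> p x j} \<union> (if p x n then {n} else {})"
      by (auto simp: less_Suc_eq)
    then show ?case using Suc by (auto simp: card_insert_if)
  qed simp
  moreover have "computable (\<lambda>w. of_bool (p (pfst w) (pfst (psnd w))))"
    using computable_comp[OF assms(1)
        computable_pair[OF computable_pfst computable_pfst[OF computable_psnd]]]
    by (simp add: computable_id)
  then have "computable (\<lambda>z. prim_rec (\<lambda>_. 0)
      (\<lambda>w. psnd (psnd w) + of_bool (p (pfst w) (pfst (psnd w)))) (f z) (g z))"
    by (intro computable_prim_rec computable_add computable_intros assms(2,3))
  ultimately show ?thesis by simp
qed

lemma computable_ball_less:
  assumes "computable (\<lambda>u. of_bool (p (pfst u) (psnd u)))" "computable f" "computable g"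
  shows "computable (\<lambda>z. of_bool (\<forall>j < g z. p (f z) j))"
proof -
  have all_iff_card: "(\<forall>j < n. p x j) \<longleftrightarrow> card {j. j < n \<and> p x j} = n" for x n
  proof
    assume "\<forall>j < n. p x j"
    then have "{j. j < n \<and> p x j} = {..<n}" by auto
    then show "card {j. j < n \<and> p x j} = n" by simp
  next
    assume card: "card {j. j < n \<and> p x j} = n"
    have "{j. j < n \<and> p x j} \<subseteq> {..<n}" by auto
    from card_subset_eq[OF finite_lessThan this] card have "{j. j < n \<and> p x j} = {..<n}" by simp
    then show "\<forall>j < n. p x j" by blast
  qed
  show ?thesis
    unfolding all_iff_card by (rule computable_eq[OF computable_card_less[OF assms] assms(3)])
qed

primrec first_nonzero :: "(nat \<Rightarrow> nat) \<Rightarrow> nat \<Rightarrow> nat" where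
  "first_nonzero q 0 = 0"
| "first_nonzero q (Suc n) = (if first_nonzero q n \<noteq> 0 then first_nonzero q n else q n)"

lemma computable_first_nonzero:
  assumes "computable (\<lambda>u. q (pfst u) (psnd u))" "computable f" "computable g"
  shows "computable (\<lambda>z. first_nonzero (q (f z)) (g z))"
proof -
  have "prim_rec (\<lambda>_. 0)
      (\<lambda>w. if psnd (psnd w) \<noteq> 0 then psnd (psnd w) else q (pfst w) (pfst (psnd w))) x n
      = first_nonzero (q x) n" for x n
    by (induction n) simp_all
  moreover have "computable (\<lambda>w. q (pfst w) (pfst (psnd w)))"
    using computable_comp[OF assms(1)
        computable_pair[OF computable_pfst computable_pfst[OF computable_psnd]]]
    by (simp add: computable_id)
  then have "computable (\<lambda>z. prim_rec (\<lambda>_. 0)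
      (\<lambda>w. if psnd (psnd w) \<noteq> 0 then psnd (psnd w) else q (pfst w) (pfst (psnd w))) (f z) (g z))"
    by (intro computable_prim_rec computable_if computable_not computable_eq_0 computable_intros
        assms(2,3))
  ultimately show ?thesis by simp
qed

lemma first_nonzero_eq_0: "(\<forall>m<n. q m = 0) \<Longrightarrow> first_nonzero q n = 0"
  by (induction n) auto

lemma first_nonzero_witness: "first_nonzero q n \<noteq> 0 \<Longrightarrow> \<exists>m<n. first_nonzero q n = q m"
  by (induction n) (auto split: if_splits intro: less_SucI)

lemma first_nonzero_neq_0: "q m \<noteq> 0 \<Longrightarrow> m < n \<Longrightarrow> first_nonzero q n \<noteq> 0"
  by (induction n) (auto simp: less_Suc_eq)

lemma first_nonzero_least:
  "q m \<noteq> 0 \<Longrightarrow> \<forall>k<m. q k = 0 \<Longrightarrow> first_nonzero q n = (if m < n then q m else 0)"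
  by (induction n) (auto simp: less_Suc_eq)

lemma computable_div2:
  assumes "computable g" shows "computable (\<lambda>z. g z div 2)"
proof -
  have "{j. j < n \<and> 2 * j + 1 < n} = {..<n div 2}" for n :: nat by auto
  then have "card {j. j < n \<and> 2 * j + 1 < n} = n div 2" for n :: nat by simp
  moreover have "computable (\<lambda>n. card {j. j < n \<and> 2 * j + 1 < n})"
    by (rule computable_card_less[where p = "\<lambda>n j. 2 * j + 1 < n"]) (intro computable_intros)+
  ultimately have "computable (\<lambda>n. n div 2)" by simp
  from computable_comp[OF this assms] show ?thesis .
qed

definition bit_at :: "nat \<Rightarrow> nat \<Rightarrow> nat" where "bit_at i q = i div 2 ^ q mod 2"

lemma computable_bit_at:
  assumes "computable f" "computable g" shows "computable (\<lambda>z. bit_at (f z) (g z))"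
proof -
  have "((\<lambda>n::nat. n div 2) ^^ q) i = i div 2 ^ q" for q i
    by (induction q arbitrary: i) (simp_all add: div_mult2_eq[symmetric] mult.commute)
  then have "bit_at i q = ((\<lambda>n. n div 2) ^^ q) i - 2 * (((\<lambda>n. n div 2) ^^ q) i div 2)" for i q
    by (simp add: bit_at_def minus_mult_div_eq_mod)
  moreover have "computable (\<lambda>z.
      ((\<lambda>n. n div 2) ^^ g z) (f z) - 2 * (((\<lambda>n. n div 2) ^^ g z) (f z) div 2))"
    by (intro computable_diff computable_mult computable_div2 computable_funpow computable_const
        computable_id assms)
  ultimately show ?thesis by simp
qed

lemma computable_power2:
  assumes "computable g" shows "computable (\<lambda>z. 2 ^ g z)"
proof -
  have "((\<lambda>x. x + x) ^^ n) 1 = (2::nat) ^ n" for n by (induction n) simp_all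
  moreover have "computable (\<lambda>z. ((\<lambda>x. x + x) ^^ g z) 1)"
    by (intro computable_funpow computable_add computable_const computable_id assms)
  ultimately show ?thesis by simp
qed

section \<open>Certificates of oracle computations\<close>

lemma enc_eq_iff [simp]: "enc p = enc q \<longleftrightarrow> p = q"
  by (induction p arbitrary: q; case_tac q; simp add: prod_encode_eq)

text \<open>A certificate is a list of nodes; a node is a 6-tuple (kind, program code, input, output,
  offset of first premise, offset of second premise).  A node of kind 0 asserts
  eval A p x y; a node of kind 1 asserts that p has nonzero values at (x, m) for all m < y, the
  side condition of the Mu rule.  Premises lie strictly later in the list, so validity is a local
  check of every node against its two premises; oracle queries below L are answered by the
  bits of i.\<close>

definition node :: "nat \<Rightarrow> nat \<Rightarrow> nat \<Rightarrow> nat \<Rightarrow> nat \<Rightarrow> nat \<Rightarrow> nat" where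
  "node k c x y d1 d2 = pair k (pair c (pair x (pair y (pair d1 d2))))"

definition node_kind :: "nat \<Rightarrow> nat" where "node_kind n = pfst n"
definition node_prog :: "nat \<Rightarrow> nat" where "node_prog n = pfst (psnd n)"
definition node_in :: "nat \<Rightarrow> nat" where "node_in n = pfst (psnd (psnd n))"
definition node_out :: "nat \<Rightarrow> nat" where "node_out n = pfst (psnd (psnd (psnd n)))"
definition node_off1 :: "nat \<Rightarrow> nat" where "node_off1 n = pfst (psnd (psnd (psnd (psnd n))))"
definition node_off2 :: "nat \<Rightarrow> nat" where "node_off2 n = psnd (psnd (psnd (psnd (psnd n))))"

lemma node_simps [simp]:
  "node_kind (node k c x y d1 d2) = k" "node_prog (node k c x y d1 d2) = c"
  "node_in (node k c x y d1 d2) = x" "node_out (node k c x y d1 d2) = y"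
  "node_off1 (node k c x y d1 d2) = d1" "node_off2 (node k c x y d1 d2) = d2"
  by (simp_all add: node_def node_kind_def node_prog_def node_in_def node_out_def node_off1_def
      node_off2_def)

lemma node_eta:
  "node (node_kind n) (node_prog n) (node_in n) (node_out n) (node_off1 n) (node_off2 n) = n"
  by (simp add: node_def node_kind_def node_prog_def node_in_def node_out_def node_off1_def
      node_off2_def)

definition child_in_range :: "nat \<Rightarrow> nat \<Rightarrow> nat \<Rightarrow> bool" where
  "child_in_range len j d \<longleftrightarrow> 0 < d \<and> j + d < len"

definition valid_step :: "nat \<Rightarrow> nat \<Rightarrow> nat \<Rightarrow> nat \<Rightarrow> nat \<Rightarrow> nat \<Rightarrow> nat \<Rightarrow> bool" where
  "valid_step L i len j nd c1 c2 \<longleftrightarrow>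
   (node_kind nd = 0 \<and> (
     (node_prog nd = pair 0 0 \<and> node_out nd = 0) \<or>
     (node_prog nd = pair 1 0 \<and> node_out nd = Suc (node_in nd)) \<or>
     (node_prog nd = pair 2 0 \<and> node_out nd = pfst (node_in nd)) \<or>
     (node_prog nd = pair 3 0 \<and> node_out nd = psnd (node_in nd)) \<or>
     (node_prog nd = pair 4 0 \<and> node_in nd < L \<and> node_out nd = bit_at i (node_in nd)) \<or>
     (pfst (node_prog nd) = 5 \<and> child_in_range len j (node_off1 nd) \<and>
        child_in_range len j (node_off2 nd) \<and>
        node_kind c1 = 0 \<and> node_prog c1 = pfst (psnd (node_prog nd)) \<and> node_in c1 = node_in nd \<and>
        node_kind c2 = 0 \<and> node_prog c2 = psnd (psnd (node_prog nd)) \<and> node_in c2 = node_in nd \<and>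
        node_out nd = pair (node_out c1) (node_out c2)) \<or>
     (pfst (node_prog nd) = 6 \<and> child_in_range len j (node_off1 nd) \<and>
        child_in_range len j (node_off2 nd) \<and>
        node_kind c1 = 0 \<and> node_prog c1 = psnd (psnd (node_prog nd)) \<and> node_in c1 = node_in nd \<and>
        node_kind c2 = 0 \<and> node_prog c2 = pfst (psnd (node_prog nd)) \<and> node_in c2 = node_out c1 \<and>
        node_out c2 = node_out nd) \<or>
     (pfst (node_prog nd) = 7 \<and> child_in_range len j (node_off1 nd) \<and> psnd (node_in nd) = 0 \<and>
        node_kind c1 = 0 \<and> node_prog c1 = pfst (psnd (node_prog nd)) \<and>
        node_in c1 = pfst (node_in nd) \<and> node_out c1 = node_out nd) \<or>
     (pfst (node_prog nd) = 7 \<and> child_in_range len j (node_off1 nd) \<and>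
        child_in_range len j (node_off2 nd) \<and> psnd (node_in nd) \<noteq> 0 \<and>
        node_kind c1 = 0 \<and> node_prog c1 = node_prog nd \<and>
        node_in c1 = pair (pfst (node_in nd)) (psnd (node_in nd) - 1) \<and>
        node_kind c2 = 0 \<and> node_prog c2 = psnd (psnd (node_prog nd)) \<and>
        node_in c2 = pair (pfst (node_in nd)) (pair (psnd (node_in nd) - 1) (node_out c1)) \<and>
        node_out c2 = node_out nd) \<or>
     (pfst (node_prog nd) = 8 \<and> child_in_range len j (node_off1 nd) \<and>
        child_in_range len j (node_off2 nd) \<and>
        node_kind c1 = 1 \<and> node_prog c1 = psnd (node_prog nd) \<and> node_in c1 = node_in nd \<and>
        node_out c1 = node_out nd \<and>
        node_kind c2 = 0 \<and> node_prog c2 = psnd (node_prog nd) \<and>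
        node_in c2 = pair (node_in nd) (node_out nd) \<and> node_out c2 = 0))) \<or>
   (node_kind nd = 1 \<and> (node_out nd = 0 \<or>
     (child_in_range len j (node_off1 nd) \<and> child_in_range len j (node_off2 nd) \<and>
        node_kind c1 = 1 \<and> node_prog c1 = node_prog nd \<and> node_in c1 = node_in nd \<and>
        node_out c1 = node_out nd - 1 \<and>
        node_kind c2 = 0 \<and> node_prog c2 = node_prog nd \<and>
        node_in c2 = pair (node_in nd) (node_out nd - 1) \<and> node_out c2 \<noteq> 0)))"

definition codes_prefix :: "(nat \<Rightarrow> bool) \<Rightarrow> nat \<Rightarrow> nat \<Rightarrow> bool" where
  "codes_prefix A L i \<longleftrightarrow> (\<forall>q<L. bit_at i q = of_bool (A q))"

definition node_holds :: "(nat \<Rightarrow> bool) \<Rightarrow> nat \<Rightarrow> bool" where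
  "node_holds A nd \<longleftrightarrow>
     (node_kind nd = 0 \<longrightarrow> (\<forall>p. enc p = node_prog nd \<longrightarrow> eval A p (node_in nd) (node_out nd))) \<and>
     (node_kind nd = 1 \<longrightarrow> (\<forall>p. enc p = node_prog nd \<longrightarrow>
        (\<forall>m<node_out nd. \<exists>v. v \<noteq> 0 \<and> eval A p (pair (node_in nd) m) v)))"

lemma eval_of_valid_step:
  assumes step: "valid_step L i len j nd c1 c2" and bits: "codes_prefix A L i"
    and holds1: "child_in_range len j (node_off1 nd) \<Longrightarrow> node_holds A c1"
    and holds2: "child_in_range len j (node_off2 nd) \<Longrightarrow> node_holds A c2"
    and kind: "node_kind nd = 0" and prog: "node_prog nd = enc p"
  shows "eval A p (node_in nd) (node_out nd)"
proof (cases p)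
  case Orc
  with step kind prog bits have "node_out nd = (if A (node_in nd) then 1 else 0)"
    by (auto simp: valid_step_def codes_prefix_def)
  with Orc show ?thesis by (simp add: eval.orc)
next
  case (Rec f g)
  show ?thesis
  proof (cases "psnd (node_in nd)")
    case 0
    with step kind prog Rec holds1 have "eval A f (pfst (node_in nd)) (node_out nd)"
      by (auto simp: valid_step_def node_holds_def)
    then have "eval A (Rec f g) (pair (pfst (node_in nd)) (psnd (node_in nd))) (node_out nd)"
      using 0 by (simp add: eval.rec0)
    with Rec show ?thesis by simp
  next
    case (Suc n)
    with step kind prog Rec holds1 holds2
    have "eval A (Rec f g) (pair (pfst (node_in nd)) n) (node_out c1)"
      and "eval A g (pair (pfst (node_in nd)) (pair n (node_out c1))) (node_out nd)"
      by (auto simp: valid_step_def node_holds_def)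
    then have "eval A (Rec f g) (pair (pfst (node_in nd)) (psnd (node_in nd))) (node_out nd)"
      using Suc by (simp add: eval.recS)
    with Rec show ?thesis by simp
  qed
qed (use step kind prog holds1 holds2 in
      \<open>auto simp: valid_step_def node_holds_def pfst_def psnd_def intro: eval.intros\<close>)

lemma nonzero_of_valid_step:
  assumes step: "valid_step L i len j nd c1 c2"
    and holds1: "child_in_range len j (node_off1 nd) \<Longrightarrow> node_holds A c1"
    and holds2: "child_in_range len j (node_off2 nd) \<Longrightarrow> node_holds A c2"
    and kind: "node_kind nd = 1" and prog: "node_prog nd = enc p" and m: "m < node_out nd"
  shows "\<exists>v. v \<noteq> 0 \<and> eval A p (pair (node_in nd) m) v"
proof -
  from step kind m have "child_in_range len j (node_off1 nd) \<and> child_in_range len j (node_off2 nd) \<and>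
      node_kind c1 = 1 \<and> node_prog c1 = node_prog nd \<and> node_in c1 = node_in nd \<and>
      node_out c1 = node_out nd - 1 \<and> node_kind c2 = 0 \<and> node_prog c2 = node_prog nd \<and>
      node_in c2 = pair (node_in nd) (node_out nd - 1) \<and> node_out c2 \<noteq> 0"
    by (auto simp: valid_step_def)
  with holds1 holds2 prog
  have below: "\<forall>m < node_out nd - 1. \<exists>v. v \<noteq> 0 \<and> eval A p (pair (node_in nd) m) v"
    and last: "node_out c2 \<noteq> 0 \<and> eval A p (pair (node_in nd) (node_out nd - 1)) (node_out c2)"
    by (auto simp: node_holds_def)
  show ?thesis
  proof (cases "m < node_out nd - 1")
    case False
    with m have "m = node_out nd - 1" by simp
    with last show ?thesis by blast
  qed (use below in blast)
qed

lemma node_holds_of_valid_step: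
  assumes "valid_step L i len j nd c1 c2" "codes_prefix A L i"
    "child_in_range len j (node_off1 nd) \<Longrightarrow> node_holds A c1"
    "child_in_range len j (node_off2 nd) \<Longrightarrow> node_holds A c2"
  shows "node_holds A nd"
  using eval_of_valid_step[OF assms] nonzero_of_valid_step[OF assms(1,3,4)]
  by (auto simp: node_holds_def)

definition valid_cert :: "nat \<Rightarrow> nat \<Rightarrow> nat \<Rightarrow> (nat \<Rightarrow> nat) \<Rightarrow> bool" where
  "valid_cert L i len nt \<longleftrightarrow>
     (\<forall>j<len. valid_step L i len j (nt j) (nt (j + node_off1 (nt j))) (nt (j + node_off2 (nt j))))"

lemma valid_cert_sound:
  assumes "valid_cert L i len nt" "codes_prefix A L i" "j < len"
  shows "node_holds A (nt j)"
  using assms(3)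
proof (induction "len - j" arbitrary: j rule: less_induct)
  case less
  show ?case
  proof (rule node_holds_of_valid_step)
    show "valid_step L i len j (nt j) (nt (j + node_off1 (nt j))) (nt (j + node_off2 (nt j)))"
      using assms(1) less.prems by (auto simp: valid_cert_def)
    show "node_holds A (nt (j + node_off1 (nt j)))" if "child_in_range len j (node_off1 (nt j))"
      using that less.hyps[of "j + node_off1 (nt j)"] by (auto simp: child_in_range_def)
    show "node_holds A (nt (j + node_off2 (nt j)))" if "child_in_range len j (node_off2 (nt j))"
      using that less.hyps[of "j + node_off2 (nt j)"] by (auto simp: child_in_range_def)
  qed (rule assms(2))
qed

lemma valid_step_reindex:
  assumes "valid_step L i len j nd c1 c2"
    "child_in_range len j (node_off1 nd) \<Longrightarrow> c1' = c1 \<and> child_in_range len' j' (node_off1 nd)"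
    "child_in_range len j (node_off2 nd) \<Longrightarrow> c2' = c2 \<and> child_in_range len' j' (node_off2 nd)"
  shows "valid_step L i len' j' nd c1' c2'"
  using assms(1) unfolding valid_step_def
  by (elim disjE conjE) (use assms(2,3) in simp_all)

lemma valid_cert_cong:
  assumes "valid_cert L i len nt" "\<And>k. k < len \<Longrightarrow> nt k = nt' k"
  shows "valid_cert L i len nt'"
  unfolding valid_cert_def
proof (intro allI impI)
  fix j assume "j < len"
  with assms have
    "valid_step L i len j (nt' j) (nt (j + node_off1 (nt' j))) (nt (j + node_off2 (nt' j)))"
    by (auto simp: valid_cert_def)
  then show
    "valid_step L i len j (nt' j) (nt' (j + node_off1 (nt' j))) (nt' (j + node_off2 (nt' j)))"
    by (rule valid_step_reindex) (auto simp: child_in_range_def assms(2))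
qed

lemma valid_cert_shift:
  assumes "valid_cert L i (length ns) (nth ns)" "j < length ns"
    and "\<And>k. k < length ns \<Longrightarrow> ms ! (Suc (n + k)) = ns ! k" "n + length ns < length ms"
  shows "valid_step L i (length ms) (Suc (n + j)) (ms ! Suc (n + j))
           (ms ! (Suc (n + j) + node_off1 (ms ! Suc (n + j))))
           (ms ! (Suc (n + j) + node_off2 (ms ! Suc (n + j))))"
proof -
  have root: "ms ! Suc (n + j) = ns ! j" using assms(2,3) by simp
  have child: "ms ! (Suc (n + j) + d) = ns ! (j + d)" if "j + d < length ns" for d
    using assms(3)[OF that] by (simp add: ac_simps)
  have "valid_step L i (length ns) j (ns ! j)
      (ns ! (j + node_off1 (ns ! j))) (ns ! (j + node_off2 (ns ! j)))"
    using assms(1,2) by (auto simp: valid_cert_def)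
  then show ?thesis
    unfolding root
    by (rule valid_step_reindex) (use assms(4) child in \<open>auto simp: child_in_range_def\<close>)
qed

lemma valid_cert_Cons_append:
  assumes "valid_cert L i (length ns1) (nth ns1)" "valid_cert L i (length ns2) (nth ns2)"
    and "valid_step L i (length (h # ns1 @ ns2)) 0 h
           ((h # ns1 @ ns2) ! node_off1 h) ((h # ns1 @ ns2) ! node_off2 h)"
  shows "valid_cert L i (length (h # ns1 @ ns2)) (nth (h # ns1 @ ns2))"
  unfolding valid_cert_def
proof (intro allI impI)
  fix j assume j: "j < length (h # ns1 @ ns2)"
  consider "j = 0" | j' where "j = Suc (0 + j')" "j' < length ns1"
    | j' where "j = Suc (length ns1 + j')" "j' < length ns2"
    using j by (cases j) (auto, metis add_diff_inverse_nat less_diff_conv2 not_less)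
  then show "valid_step L i (length (h # ns1 @ ns2)) j ((h # ns1 @ ns2) ! j)
      ((h # ns1 @ ns2) ! (j + node_off1 ((h # ns1 @ ns2) ! j)))
      ((h # ns1 @ ns2) ! (j + node_off2 ((h # ns1 @ ns2) ! j)))"
  proof cases
    case 1
    with assms(3) show ?thesis by simp
  next
    case 2
    with valid_cert_shift[OF assms(1) 2(2), of "h # ns1 @ ns2" 0] show ?thesis
      by (simp add: nth_append)
  next
    case 3
    with valid_cert_shift[OF assms(2) 3(2), of "h # ns1 @ ns2" "length ns1"] show ?thesis
      by (simp add: nth_append)
  qed
qed

definition certifies ::
  "nat \<Rightarrow> (nat \<Rightarrow> bool) \<Rightarrow> nat \<Rightarrow> nat \<Rightarrow> nat \<Rightarrow> nat list \<Rightarrow> nat \<Rightarrow> bool" where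
  "certifies k A c x y ns M \<longleftrightarrow> ns \<noteq> [] \<and>
     node_kind (hd ns) = k \<and> node_prog (hd ns) = c \<and> node_in (hd ns) = x \<and> node_out (hd ns) = y \<and>
     (\<forall>L i. M \<le> L \<longrightarrow> codes_prefix A L i \<longrightarrow> valid_cert L i (length ns) (nth ns))"

lemma certifies_leaf:
  assumes "\<And>L i. M \<le> L \<Longrightarrow> codes_prefix A L i \<Longrightarrow>
    valid_step L i 1 0 (node k c x y 0 0) (node k c x y 0 0) (node k c x y 0 0)"
  shows "certifies k A c x y [node k c x y 0 0] M"
  using assms unfolding certifies_def valid_cert_def by auto

lemma certifies_hd:
  "certifies k A c x y ns M \<Longrightarrow> hd ns = node k c x y (node_off1 (hd ns)) (node_off2 (hd ns))"
  by (metis certifies_def node_eta)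

lemma certifies_binary:
  assumes c1: "certifies k1 A c1 x1 y1 ns1 M1" and c2: "certifies k2 A c2 x2 y2 ns2 M2"
    and step: "\<And>L i len. child_in_range len 0 1 \<Longrightarrow> child_in_range len 0 (Suc (length ns1)) \<Longrightarrow>
      valid_step L i len 0 (node k c x y 1 (Suc (length ns1)))
        (node k1 c1 x1 y1 (node_off1 (hd ns1)) (node_off2 (hd ns1)))
        (node k2 c2 x2 y2 (node_off1 (hd ns2)) (node_off2 (hd ns2)))"
  shows "certifies k A c x y (node k c x y 1 (Suc (length ns1)) # ns1 @ ns2) (max M1 M2)"
  unfolding certifies_def
proof (intro conjI allI impI)
  fix L i assume "max M1 M2 \<le> L" "codes_prefix A L i"
  let ?h = "node k c x y 1 (Suc (length ns1))"
  have ne: "ns1 \<noteq> []" "ns2 \<noteq> []" using c1 c2 by (auto simp: certifies_def)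
  then have "(?h # ns1 @ ns2) ! 1 = hd ns1" "(?h # ns1 @ ns2) ! Suc (length ns1) = hd ns2"
    by (auto simp: nth_append hd_conv_nth)
  with step[of "length (?h # ns1 @ ns2)" L i] ne certifies_hd[OF c1] certifies_hd[OF c2]
  have "valid_step L i (length (?h # ns1 @ ns2)) 0 ?h
      ((?h # ns1 @ ns2) ! node_off1 ?h) ((?h # ns1 @ ns2) ! node_off2 ?h)"
    by (auto simp: child_in_range_def)
  moreover have "valid_cert L i (length ns1) (nth ns1)" "valid_cert L i (length ns2) (nth ns2)"
    using c1 c2 \<open>max M1 M2 \<le> L\<close> \<open>codes_prefix A L i\<close> by (auto simp: certifies_def)
  ultimately show "valid_cert L i (length (?h # ns1 @ ns2)) (nth (?h # ns1 @ ns2))"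
    using valid_cert_Cons_append by blast
qed simp_all

lemma certifies_unary:
  assumes c1: "certifies k1 A c1 x1 y1 ns1 M1"
    and step: "\<And>L i len c2. child_in_range len 0 1 \<Longrightarrow>
      valid_step L i len 0 (node k c x y 1 0)
        (node k1 c1 x1 y1 (node_off1 (hd ns1)) (node_off2 (hd ns1))) c2"
  shows "certifies k A c x y (node k c x y 1 0 # ns1) M1"
  unfolding certifies_def
proof (intro conjI allI impI)
  fix L i assume "M1 \<le> L" "codes_prefix A L i"
  let ?h = "node k c x y 1 0"
  have ne: "ns1 \<noteq> []" using c1 by (auto simp: certifies_def)
  then have "(?h # ns1 @ []) ! 1 = hd ns1" by (auto simp: hd_conv_nth)
  with step[of "length (?h # ns1 @ [])" L i] ne certifies_hd[OF c1]
  have "valid_step L i (length (?h # ns1 @ [])) 0 ?h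
      ((?h # ns1 @ []) ! node_off1 ?h) ((?h # ns1 @ []) ! node_off2 ?h)"
    by (auto simp: child_in_range_def)
  moreover have "valid_cert L i (length ns1) (nth ns1)" "valid_cert L i (length []) (nth [])"
    using c1 \<open>M1 \<le> L\<close> \<open>codes_prefix A L i\<close> by (auto simp: certifies_def valid_cert_def)
  ultimately show "valid_cert L i (length (?h # ns1)) (nth (?h # ns1))"
    using valid_cert_Cons_append by fastforce
qed simp_all

lemma certifies_Mu_premise:
  "(\<forall>m<n. \<exists>v. v \<noteq> 0 \<and> (\<exists>ns M. certifies 0 A c (pair x m) v ns M)) \<Longrightarrow>
   \<exists>ns M. certifies 1 A c x n ns M"
proof (induction n)
  case 0
  have "certifies 1 A c x 0 [node 1 c x 0 0 0] 0"
    by (rule certifies_leaf) (simp add: valid_step_def)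
  then show ?case by blast
next
  case (Suc n)
  then obtain ns1 M1 where c1: "certifies 1 A c x n ns1 M1" by auto
  from Suc.prems obtain v ns2 M2 where "v \<noteq> 0" and c2: "certifies 0 A c (pair x n) v ns2 M2"
    by blast
  show ?case
    by (rule exI, rule exI, rule certifies_binary[OF c1 c2])
      (use \<open>v \<noteq> 0\<close> in \<open>simp add: valid_step_def\<close>)
qed

lemma eval_certified: "eval A p x y \<Longrightarrow> \<exists>ns M. certifies 0 A (enc p) x y ns M"
proof (induction rule: eval.induct)
  case (orc A x)
  let ?y = "if A x then 1 else 0"
  have "certifies 0 A (enc Orc) x ?y [node 0 (enc Orc) x ?y 0 0] (Suc x)"
    by (rule certifies_leaf) (auto simp: valid_step_def codes_prefix_def)
  then show ?case by blast
next
  case (pair A f x y g z)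
  then obtain ns1 M1 ns2 M2
    where c1: "certifies 0 A (enc f) x y ns1 M1" and c2: "certifies 0 A (enc g) x z ns2 M2"
    by blast
  show ?case by (rule exI, rule exI, rule certifies_binary[OF c1 c2]) (simp add: valid_step_def)
next
  case (comp A g x y f z)
  then obtain ns1 M1 ns2 M2
    where c1: "certifies 0 A (enc g) x y ns1 M1" and c2: "certifies 0 A (enc f) y z ns2 M2"
    by blast
  show ?case by (rule exI, rule exI, rule certifies_binary[OF c1 c2]) (simp add: valid_step_def)
next
  case (rec0 A f x y g)
  then obtain ns1 M1 where c1: "certifies 0 A (enc f) x y ns1 M1" by blast
  show ?case by (rule exI, rule exI, rule certifies_unary[OF c1]) (simp add: valid_step_def)
next
  case (recS A f g x n y z)
  then obtain ns1 M1 ns2 M2 where c1: "certifies 0 A (enc (Rec f g)) (pair x n) y ns1 M1"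
    and c2: "certifies 0 A (enc g) (pair x (pair n y)) z ns2 M2" by blast
  show ?case by (rule exI, rule exI, rule certifies_binary[OF c1 c2]) (simp add: valid_step_def)
next
  case (mu A f x n)
  then obtain ns2 M2 where c2: "certifies 0 A (enc f) (pair x n) 0 ns2 M2" by blast
  from mu.IH(2) have "\<forall>m<n. \<exists>v. v \<noteq> 0 \<and> (\<exists>ns M. certifies 0 A (enc f) (pair x m) v ns M)"
    by blast
  then obtain ns1 M1 where c1: "certifies 1 A (enc f) x n ns1 M1"
    using certifies_Mu_premise by blast
  show ?case by (rule exI, rule exI, rule certifies_binary[OF c1 c2]) (simp add: valid_step_def)
qed (rule exI, rule exI[of _ 0], rule certifies_leaf,
    simp add: valid_step_def pfst_def psnd_def)+

section \<open>Searching for certificates\<close>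

primrec list_code :: "nat list \<Rightarrow> nat" where
  "list_code [] = 0"
| "list_code (h # t) = pair h (list_code t)"

definition code_nth :: "nat \<Rightarrow> nat \<Rightarrow> nat" where "code_nth w k = pfst ((psnd ^^ k) w)"

lemma code_nth_list_code: "k < length ns \<Longrightarrow> code_nth (list_code ns) k = ns ! k"
proof (induction ns arbitrary: k)
  case (Cons h t)
  then show ?case by (cases k) (auto simp: code_nth_def funpow_swap1)
qed simp

definition valid_cert_code :: "nat \<Rightarrow> nat \<Rightarrow> nat \<Rightarrow> bool" where
  "valid_cert_code L i w \<longleftrightarrow> 0 < pfst w \<and> valid_cert L i (pfst w) (code_nth (psnd w))"

definition cert_root :: "nat \<Rightarrow> nat" where "cert_root w = code_nth (psnd w) 0"

definition cert_answer :: "nat \<Rightarrow> nat \<Rightarrow> nat \<Rightarrow> nat \<Rightarrow> nat \<Rightarrow> nat" where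
  "cert_answer c x L i w =
     (if valid_cert_code L i w \<and> node_kind (cert_root w) = 0 \<and> node_prog (cert_root w) = c \<and>
         node_in (cert_root w) = x
      then Suc (node_out (cert_root w)) else 0)"

text \<open>search k c x L i plays the role of running the program with code c on x for k steps with
  the oracle prefix of length L coded by i: it returns Suc y as soon as one of the codes
  0, ..., k is a certificate for output y, and 0 otherwise.\<close>

definition search :: "nat \<Rightarrow> nat \<Rightarrow> nat \<Rightarrow> nat \<Rightarrow> nat \<Rightarrow> nat" where
  "search k c x L i = first_nonzero (cert_answer c x L i) (Suc k)"

lemma search_sound:
  assumes "search k (enc p) x L i = Suc y" "codes_prefix A L i"
  shows "eval A p x y"
proof -
  obtain w where "cert_answer (enc p) x L i w = Suc y"
    using first_nonzero_witness assms(1) unfolding search_def by (metis nat.distinct(1))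
  then have "valid_cert_code L i w" and root: "node_kind (cert_root w) = 0"
    "node_prog (cert_root w) = enc p" "node_in (cert_root w) = x" "node_out (cert_root w) = y"
    by (auto simp: cert_answer_def split: if_splits)
  then have "node_holds A (cert_root w)"
    using valid_cert_sound[of L i "pfst w" "code_nth (psnd w)" A 0] assms(2)
    by (auto simp: valid_cert_code_def cert_root_def)
  with root show ?thesis by (auto simp: node_holds_def)
qed

lemma search_complete:
  assumes "eval A p x y"
  shows "\<exists>K. \<forall>k L i. K \<le> k \<longrightarrow> K \<le> L \<longrightarrow> codes_prefix A L i \<longrightarrow> search k (enc p) x L i = Suc y"
proof -
  obtain ns M where cert: "certifies 0 A (enc p) x y ns M" using eval_certified[OF assms] by blast
  define w where "w = pair (length ns) (list_code ns)"
  show ?thesis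
  proof (intro exI allI impI)
    fix k L i assume k: "max w M \<le> k" and L: "max w M \<le> L" and bits: "codes_prefix A L i"
    have ne: "ns \<noteq> []" using cert by (simp add: certifies_def)
    have "valid_cert L i (length ns) (nth ns)" using cert L bits by (auto simp: certifies_def)
    then have "valid_cert L i (length ns) (code_nth (list_code ns))"
      by (rule valid_cert_cong) (simp add: code_nth_list_code)
    moreover have "cert_root w = hd ns"
      using ne by (simp add: w_def cert_root_def code_nth_list_code hd_conv_nth)
    ultimately have "cert_answer (enc p) x L i w = Suc y"
      using ne cert by (simp add: cert_answer_def valid_cert_code_def w_def certifies_def)
    then have "search k (enc p) x L i \<noteq> 0"
      using first_nonzero_neq_0 k unfolding search_def
      by (metis le_imp_less_Suc max.boundedE nat.distinct(1))
    then obtain y' where y': "search k (enc p) x L i = Suc y'" using not0_implies_Suc by blast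
    with search_sound bits assms eval_deterministic have "y' = y" by blast
    with y' show "search k (enc p) x L i = Suc y" by simp
  qed
qed

lemma valid_step_mono:
  assumes "valid_step L i len j nd c1 c2" "\<forall>q<L. bit_at i q = bit_at i' q" "L \<le> L'"
  shows "valid_step L' i' len j nd c1 c2"
  using assms(1) unfolding valid_step_def
  by (elim disjE conjE) (use assms(2,3) in simp_all)

lemma search_mono:
  assumes "search k (enc p) x L i = Suc y" "codes_prefix A L i" "codes_prefix A L' i'"
    and "L \<le> L'" "k \<le> k'"
  shows "search k' (enc p) x L' i' = Suc y"
proof -
  obtain w where w: "w < Suc k" "cert_answer (enc p) x L i w = Suc y"
    using first_nonzero_witness assms(1) unfolding search_def by (metis nat.distinct(1))
  have "\<forall>q<L. bit_at i q = bit_at i' q" using assms(2-4) by (auto simp: codes_prefix_def)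
  with w assms(4) have "cert_answer (enc p) x L' i' w = Suc y"
    by (auto simp: cert_answer_def valid_cert_code_def valid_cert_def split: if_splits
        intro: valid_step_mono)
  with w assms(5) have "search k' (enc p) x L' i' \<noteq> 0"
    unfolding search_def
    by (metis first_nonzero_neq_0 le_imp_less_Suc less_Suc_eq_le order.strict_trans1
        nat.distinct(1))
  then obtain y' where y': "search k' (enc p) x L' i' = Suc y'" using not0_implies_Suc by blast
  with search_sound assms(1-3) eval_deterministic have "y' = y" by blast
  with y' show ?thesis by simp
qed

lemma computable_node_fields:
  assumes "computable g"
  shows "computable (\<lambda>z. node_kind (g z))" "computable (\<lambda>z. node_prog (g z))"
    "computable (\<lambda>z. node_in (g z))" "computable (\<lambda>z. node_out (g z))"
    "computable (\<lambda>z. node_off1 (g z))" "computable (\<lambda>z. node_off2 (g z))"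
  unfolding node_kind_def node_prog_def node_in_def node_out_def node_off1_def node_off2_def
  by (intro computable_pfst computable_psnd assms)+

lemma computable_code_nth:
  "computable f \<Longrightarrow> computable g \<Longrightarrow> computable (\<lambda>z. code_nth (f z) (g z))"
  unfolding code_nth_def by (intro computable_pfst computable_funpow computable_psnd computable_id)

lemma computable_valid_step:
  assumes "computable f1" "computable f2" "computable f3" "computable f4" "computable f5"
    "computable f6" "computable f7"
  shows "computable (\<lambda>z. of_bool (valid_step (f1 z) (f2 z) (f3 z) (f4 z) (f5 z) (f6 z) (f7 z)))"
proof -
  have "computable (\<lambda>v. of_bool (valid_step (pfst v) (pfst (psnd v)) (pfst (psnd (psnd v)))
      (pfst (psnd (psnd (psnd v)))) (pfst (psnd (psnd (psnd (psnd v)))))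
      (pfst (psnd (psnd (psnd (psnd (psnd v)))))) (psnd (psnd (psnd (psnd (psnd (psnd v))))))))"
    unfolding valid_step_def child_in_range_def
    by (intro computable_intros computable_bit_at computable_node_fields)
  from computable_comp[OF this computable_pair[OF assms(1) computable_pair[OF assms(2)
      computable_pair[OF assms(3) computable_pair[OF assms(4) computable_pair[OF assms(5)
      computable_pair[OF assms(6,7)]]]]]]]
  show ?thesis by simp
qed

lemma computable_valid_cert_code:
  assumes "computable f" "computable g" "computable h"
  shows "computable (\<lambda>z. of_bool (valid_cert_code (f z) (g z) (h z)))"
proof -
  let ?step = "\<lambda>a j. valid_step (pfst (pfst a)) (psnd (pfst a)) (pfst (psnd a)) j
    (code_nth (psnd (psnd a)) j)
    (code_nth (psnd (psnd a)) (j + node_off1 (code_nth (psnd (psnd a)) j)))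
    (code_nth (psnd (psnd a)) (j + node_off2 (code_nth (psnd (psnd a)) j)))"
  have "computable (\<lambda>u. of_bool (?step (pfst u) (psnd u)))"
    by (intro computable_valid_step computable_code_nth computable_add computable_node_fields
        computable_pfst computable_psnd computable_id)
  then have "computable (\<lambda>z. of_bool (0 < pfst (h z) \<and>
      (\<forall>j < pfst (h z). ?step (pair (pair (f z) (g z)) (h z)) j)))"
    by (intro computable_conj computable_less computable_const computable_pfst assms
        computable_ball_less[where p = ?step] computable_pair)
  then show ?thesis by (simp add: valid_cert_code_def valid_cert_def)
qed

lemma computable_search:
  assumes "computable f1" "computable f2" "computable f3" "computable f4" "computable f5"
  shows "computable (\<lambda>z. search (f1 z) (f2 z) (f3 z) (f4 z) (f5 z))"
proof -
  let ?answer =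
    "\<lambda>a w. cert_answer (pfst a) (pfst (psnd a)) (pfst (psnd (psnd a))) (psnd (psnd (psnd a))) w"
  have "computable (\<lambda>u. ?answer (pfst u) (psnd u))"
    unfolding cert_answer_def cert_root_def
    by (intro computable_if computable_conj computable_eq computable_valid_cert_code
        computable_node_fields computable_code_nth computable_Suc computable_pfst computable_psnd
        computable_const computable_id)
  then have "computable (\<lambda>z.
      first_nonzero (?answer (pair (f2 z) (pair (f3 z) (pair (f4 z) (f5 z)))))
      (Suc (f1 z)))"
    by (intro computable_first_nonzero[where q = ?answer] computable_pair computable_Suc assms)
  then show ?thesis by (simp add: search_def)
qed

section \<open>Kleene's recursion theorem\<close>

lemma computable_enc_constp: "computable (\<lambda>n. enc (constp n))"
proof -
  let ?step = "\<lambda>w. pair 6 (pair (pair 1 0) (psnd (psnd w)))"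
  have "prim_rec (\<lambda>_. pair 0 0) ?step 0 n = enc (constp n)" for n
    by (induction n) auto
  moreover have "computable (\<lambda>n. prim_rec (\<lambda>_. pair 0 0) ?step 0 n)"
    by (intro computable_prim_rec computable_intros)
  ultimately show ?thesis by simp
qed

text \<open>The fixed point is p = Comp M (Pairf (Comp D (constp (enc D))) IdP), where M computes f
  and D maps the code n of a program P to enc (Comp M (Pairf (Comp P (constp n)) IdP)); thus D
  applied to its own code yields enc p.\<close>

lemma recursion_theorem:
  assumes "computable f"
  shows "\<exists>p. computes p (\<lambda>c. f (pair (enc p) c))"
proof -
  obtain M where M: "computes M f" using assms computable_def by blast
  let ?self =
    "\<lambda>n. pair 6 (pair (enc M) (pair 5 (pair (pair 6 (pair n (enc (constp n)))) (enc IdP))))"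
  have "computable ?self"
    by (intro computable_pair computable_const computable_id computable_enc_constp)
  then obtain D where D: "computes D ?self" using computable_def by blast
  define p where "p = Comp M (Pairf (Comp D (constp (enc D))) IdP)"
  have "?self (enc D) = enc p" by (simp add: p_def)
  with computes_Comp[OF D computes_constp[of "enc D"]]
  have "computes (Comp D (constp (enc D))) (\<lambda>z. enc p)"
    by simp
  from computes_Comp[OF M computes_Pairf[OF this computes_IdP]]
  have "computes p (\<lambda>c. f (pair (enc p) c))" by (simp add: p_def)
  then show ?thesis by blast
qed

definition length_step :: "nat \<Rightarrow> nat" where
  "length_step w = (if pfst w = 0 then w else pair (psnd (pfst w - 1)) (Suc (psnd w)))"

definition scode_length :: "nat \<Rightarrow> nat" where
  "scode_length c = psnd ((length_step ^^ c) (pair c 0))"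

lemma scode_length_scode: "scode_length (scode s) = length s"
proof -
  have strip: "(length_step ^^ length s) (pair (scode s) k) = pair 0 (k + length s)" for k
  proof (induction s arbitrary: k)
    case (Cons b s)
    have "length_step (pair (scode (b # s)) k) = pair (scode s) (Suc k)"
      by (simp add: length_step_def)
    then show ?case using Cons[of "Suc k"] by (simp add: funpow_Suc_right del: funpow.simps)
  qed simp
  have stay: "(length_step ^^ m) (pair 0 k) = pair 0 k" for m k
    by (induction m) (auto simp: length_step_def)
  have "length s \<le> scode s"
    by (induction s) (auto intro: le_trans[OF _ le_prod_encode_2] simp del: prod_encode_eq)
  then have "(length_step ^^ scode s) (pair (scode s) 0) =
      (length_step ^^ (scode s - length s)) ((length_step ^^ length s) (pair (scode s) 0))"
    by (metis funpow_add le_add_diff_inverse2 o_apply)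
  also have "\<dots> = pair 0 (length s)" by (simp add: strip stay)
  finally show ?thesis by (simp add: scode_length_def)
qed

lemma computable_scode_length: "computable scode_length"
proof -
  have "computable length_step"
    unfolding length_step_def by (intro computable_intros computable_pred)
  then have "computable (\<lambda>c. psnd ((length_step ^^ c) (pair c 0)))"
    by (intro computable_psnd computable_funpow computable_pair computable_id computable_const)
  then show ?thesis by (simp add: scode_length_def[abs_def])
qed

section \<open>The coin-tossing measure\<close>

interpretation coin_space: prob_space coin
  unfolding coin_def by (rule prob_space_PiM) (rule prob_space_measure_pmf)

lemma space_coin [simp]: "space coin = UNIV"
  unfolding coin_def space_PiM by (simp add: PiE_def extensional_def)

definition cylinder :: "bool list \<Rightarrow> (nat \<Rightarrow> bool) set" where
  "cylinder l = {A. map A [0..<length l] = l}"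

lemma mem_cylinder_iff: "A \<in> cylinder l \<longleftrightarrow> (\<forall>q<length l. A q = l ! q)"
  unfolding cylinder_def mem_Collect_eq
proof
  assume "map A [0..<length l] = l"
  then show "\<forall>q<length l. A q = l ! q" by (metis add_0 diff_zero length_upt nth_map nth_upt)
next
  assume "\<forall>q<length l. A q = l ! q"
  then show "map A [0..<length l] = l" by (intro nth_equalityI) auto
qed

lemma cylinder_prod_emb:
  "cylinder l = prod_emb UNIV (\<lambda>_. measure_pmf (bernoulli_pmf (1/2))) {..<length l}
     (PiE {..<length l} (\<lambda>q. {l ! q}))"
proof (rule set_eqI)
  fix A :: "nat \<Rightarrow> bool"
  have "A \<in> prod_emb UNIV (\<lambda>_. measure_pmf (bernoulli_pmf (1/2))) {..<length l}
      (PiE {..<length l} (\<lambda>q. {l ! q})) \<longleftrightarrow>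
      restrict A {..<length l} \<in> PiE {..<length l} (\<lambda>q. {l ! q})"
    unfolding prod_emb_def space_PiM by (simp add: PiE_def extensional_def)
  also have "\<dots> \<longleftrightarrow> (\<forall>q\<in>{..<length l}. A q \<in> {l ! q})" by (rule restrict_PiE_iff)
  also have "\<dots> \<longleftrightarrow> A \<in> cylinder l" unfolding mem_cylinder_iff by auto
  finally show "A \<in> cylinder l \<longleftrightarrow> A \<in> prod_emb UNIV (\<lambda>_. measure_pmf (bernoulli_pmf (1/2)))
      {..<length l} (PiE {..<length l} (\<lambda>q. {l ! q}))" by blast
qed

lemma emeasure_cylinder: "emeasure coin (cylinder l) = ennreal ((1/2) ^ length l)"
proof -
  have "emeasure coin (cylinder l) =
      (\<Prod>q\<in>{..<length l}. emeasure (measure_pmf (bernoulli_pmf (1/2))) {l ! q})"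
    unfolding cylinder_prod_emb coin_def
    by (rule emeasure_PiM_emb) (auto intro: prob_space_measure_pmf)
  also have "\<dots> = (\<Prod>q\<in>{..<length l}. ennreal (1/2))"
  proof (rule prod.cong)
    fix q show "emeasure (measure_pmf (bernoulli_pmf (1/2))) {l ! q} = ennreal (1/2)"
      by (cases "l ! q") (auto simp: emeasure_pmf_single)
  qed simp
  also have "\<dots> = ennreal (1/2) ^ length l" by (subst prod_constant) simp
  also have "\<dots> = ennreal ((1/2) ^ length l)" by (rule ennreal_power) simp
  finally show ?thesis .
qed

lemma cylinder_sets: "cylinder l \<in> sets coin"
proof (rule ccontr)
  assume "cylinder l \<notin> sets coin"
  then have "emeasure coin (cylinder l) = 0" by (rule emeasure_notin_sets)
  then show False by (simp add: emeasure_cylinder)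
qed

lemma measure_cylinder: "measure coin (cylinder l) = (1/2) ^ length l"
  using emeasure_cylinder[of l] by (simp add: coin_space.emeasure_eq_measure)

lemma prefix_set_eq_Union:
  "{A. map A [0..<L] \<in> Z} = (\<Union>l \<in> Z \<inter> {l. length l = L}. cylinder l)"
  by (auto simp: cylinder_def)

lemma finite_lists_length: "finite {l :: bool list. length l = L}"
  using finite_lists_length_eq[of "UNIV :: bool set" L] by simp

lemma prefix_set_sets: "{A. map A [0..<L] \<in> Z} \<in> sets coin"
  unfolding prefix_set_eq_Union
proof (rule sets.finite_UN)
  show "finite (Z \<inter> {l. length l = L})" using finite_lists_length[of L] by auto
qed (rule cylinder_sets)

lemma measure_prefix_set:
  "measure coin {A. map A [0..<L] \<in> Z} = card (Z \<inter> {l. length l = L}) / 2 ^ L"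
proof -
  have fin: "finite (Z \<inter> {l. length l = L})" using finite_lists_length[of L] by auto
  have "measure coin {A. map A [0..<L] \<in> Z} =
      (\<Sum>l \<in> Z \<inter> {l. length l = L}. measure coin (cylinder l))"
    unfolding prefix_set_eq_Union
  proof (rule coin_space.finite_measure_finite_Union[OF fin])
    show "cylinder ` (Z \<inter> {l. length l = L}) \<subseteq> coin_space.events" using cylinder_sets by blast
    show "disjoint_family_on cylinder (Z \<inter> {l. length l = L})"
      unfolding disjoint_family_on_def cylinder_def by auto
  qed
  also have "\<dots> = (\<Sum>l \<in> Z \<inter> {l. length l = L}. (1/2) ^ L)"
    by (rule sum.cong) (auto simp: measure_cylinder)
  finally show ?thesis by (simp add: power_one_over)
qed

lemma measure_first_bit: "measure coin {A. A 0 = v} = 1/2"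
proof -
  have "{A. A 0 = v} = cylinder [v]" by (auto simp: cylinder_def)
  then show ?thesis by (simp add: measure_cylinder)
qed

primrec bits_code :: "bool list \<Rightarrow> nat" where
  "bits_code [] = 0"
| "bits_code (b # l) = of_bool b + 2 * bits_code l"

primrec bits_of :: "nat \<Rightarrow> nat \<Rightarrow> bool list" where
  "bits_of 0 i = []"
| "bits_of (Suc L) i = odd i # bits_of L (i div 2)"

lemma length_bits_of [simp]: "length (bits_of L i) = L"
  by (induction L arbitrary: i) auto

lemma bits_code_bits_of: "bits_code (bits_of L i) = i mod 2 ^ L"
proof (induction L arbitrary: i)
  case (Suc L)
  have "i mod 2 ^ Suc L = 2 * (i div 2 mod 2 ^ L) + i mod 2"
    using mod_mult2_eq[of i 2 "2 ^ L"] by simp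
  then show ?case using Suc by (simp add: odd_iff_mod_2_eq_one)
qed simp

lemma bits_of_bits_code: "bits_of (length l) (bits_code l) = l"
  by (induction l) auto

lemma bits_code_less: "bits_code l < 2 ^ length l"
  by (induction l) auto

lemma bit_at_bits_code: "q < length l \<Longrightarrow> bit_at (bits_code l) q = of_bool (l ! q)"
proof (induction l arbitrary: q)
  case (Cons b l)
  show ?case
  proof (cases q)
    case (Suc q')
    have "(of_bool b + 2 * bits_code l) div 2 ^ Suc q' =
        (of_bool b + 2 * bits_code l) div 2 div 2 ^ q'"
      by (simp add: div_mult2_eq)
    also have "\<dots> = bits_code l div 2 ^ q'" by simp
    finally show ?thesis using Cons Suc by (simp add: bit_at_def)
  qed (simp add: bit_at_def)
qed simp

lemma codes_prefix_bits_code: "codes_prefix A L (bits_code (map A [0..<L]))"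
  by (simp add: codes_prefix_def bit_at_bits_code)

lemma card_bits_code:
  "card {l. length l = L \<and> P (bits_code l)} = card {i. i < 2 ^ L \<and> P i}"
proof (rule bij_betw_same_card[of bits_code], rule bij_betw_byWitness[where f' = "bits_of L"])
qed (auto simp: bits_of_bits_code bits_code_bits_of bits_code_less)

lemma measure_bits_code:
  "measure coin {A. P (bits_code (map A [0..<L]))} = card {i. i < 2 ^ L \<and> P i} / 2 ^ L"
proof -
  have "{l. P (bits_code l)} \<inter> {l. length l = L} = {l. length l = L \<and> P (bits_code l)}" by auto
  with measure_prefix_set[of L "{l. P (bits_code l)}"] show ?thesis
    by (simp only: card_bits_code mem_Collect_eq)
qed

lemma bits_code_sets: "{A. P (bits_code (map A [0..<L]))} \<in> sets coin"
  using prefix_set_sets[of L "{l. P (bits_code l)}"] by simp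

section \<open>The diagonal tree\<close>

text \<open>The procedure runs unrelativized: prefix code 0 is that of the constantly false oracle.\<close>

definition approx_output :: "nat \<Rightarrow> nat \<Rightarrow> nat \<Rightarrow> nat" where
  "approx_output c x L = search L c x L 0"

definition value_count :: "nat \<Rightarrow> nat \<Rightarrow> nat \<Rightarrow> nat" where
  "value_count c L b = card {i. i < 2 ^ L \<and> search L c 0 L i = Suc b}"

text \<open>A nonzero decision b + 1 means that the stage is decided with bit b.\<close>

definition decision :: "nat \<Rightarrow> nat \<Rightarrow> nat \<Rightarrow> nat" where
  "decision fe x L =
     (if approx_output fe x L = 0 then 0
      else if 2 ^ L < 4 * value_count (psnd (approx_output fe x L - 1)) L 0 then 1
      else if 2 ^ L < 4 * value_count (psnd (approx_output fe x L - 1)) L 1 then 2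
      else 0)"

text \<open>For a string code c > 0, pfst (c - 1) is the first bit of the coded string.\<close>

definition diag_member :: "nat \<Rightarrow> nat \<Rightarrow> nat \<Rightarrow> nat" where
  "diag_member fe e c =
     of_bool (first_nonzero (decision fe (pair e (pair 3 4))) (scode_length c) = 0 \<or>
       pfst (c - 1) \<noteq> first_nonzero (decision fe (pair e (pair 3 4))) (scode_length c) - 1)"

definition diag_tree :: "nat \<Rightarrow> nat \<Rightarrow> bool list set" where
  "diag_tree fe e = {s. diag_member fe e (scode s) = 1}"

lemma computable_value_count:
  assumes "computable f" "computable g" "computable h"
  shows "computable (\<lambda>z. value_count (f z) (g z) (h z))"
proof -
  let ?hit = "\<lambda>a i. search (pfst a) (pfst (psnd a)) 0 (pfst a) i = Suc (psnd (psnd a))"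
  have "computable (\<lambda>u. of_bool (?hit (pfst u) (psnd u)))"
    by (intro computable_eq computable_search computable_Suc computable_pfst computable_psnd
        computable_const computable_id)
  then have "computable (\<lambda>z. card {i. i < 2 ^ g z \<and> ?hit (pair (g z) (pair (f z) (h z))) i})"
    by (intro computable_card_less[where p = ?hit] computable_power2 computable_pair assms)
  then show ?thesis by (simp add: value_count_def)
qed

lemma computable_decision:
  assumes "computable f" "computable g"
  shows "computable (\<lambda>z. decision fe (f z) (g z))"
proof -
  have out: "computable (\<lambda>z. approx_output fe (f z) (g z))"
    unfolding approx_output_def by (intro computable_search computable_const assms)
  then have "computable (\<lambda>z. psnd (approx_output fe (f z) (g z) - 1))"
    by (intro computable_psnd computable_pred)
  then have large: "computable (\<lambda>z. of_bool
      (2 ^ g z < 4 * value_count (psnd (approx_output fe (f z) (g z) - 1)) (g z) b))" for b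
    by (intro computable_less computable_power2 computable_mult computable_const
        computable_value_count assms)
  show ?thesis
    unfolding decision_def by (intro computable_if computable_eq out large computable_const)
qed

lemma computable_diag_member: "computable (\<lambda>v. diag_member fe (pfst v) (psnd v))"
proof -
  let ?d = "\<lambda>e L. decision fe (pair e (pair 3 4)) L"
  have "computable (\<lambda>u. ?d (pfst u) (psnd u))"
    by (intro computable_decision computable_pair computable_pfst computable_psnd computable_const
        computable_id)
  then have first: "computable (\<lambda>v. first_nonzero (?d (pfst v)) (scode_length (psnd v)))"
    by (intro computable_first_nonzero[where q = ?d] computable_pfst computable_id
        computable_comp[OF computable_scode_length] computable_psnd)
  show ?thesis
    unfolding diag_member_def
    by (intro computable_disj computable_not computable_eq computable_pred computable_pfst
        computable_psnd computable_const computable_id first)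
qed

lemma diag_tree_decidable: "\<exists>p. decides p (diag_tree fe (enc p))"
proof -
  obtain p where p: "computes p (\<lambda>c. diag_member fe (enc p) c)"
    using recursion_theorem[OF computable_diag_member[of fe]] by auto
  have "diag_member fe (enc p) (scode s) = (if s \<in> diag_tree fe (enc p) then 1 else 0)" for s
    by (simp add: diag_tree_def diag_member_def)
  then have "decides p (diag_tree fe (enc p))"
    unfolding decides_def eval0_def using computesD[OF p] by metis
  then show ?thesis ..
qed

definition avoid_tree :: "nat \<Rightarrow> nat \<Rightarrow> bool list set" where
  "avoid_tree L b = {s. length s \<le> L \<or> (s \<noteq> [] \<and> of_bool (hd s) \<noteq> b)}"

lemma is_tree_avoid_tree: "is_tree (avoid_tree L b)"
  unfolding is_tree_def avoid_tree_def by (auto simp: hd_append)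

lemma paths_avoid_tree: "paths (avoid_tree L b) = {A. of_bool (A 0) \<noteq> b}"
proof (rule set_eqI)
  fix A :: "nat \<Rightarrow> bool"
  have hd_map: "map A [0..<n] \<noteq> [] \<and> hd (map A [0..<n]) = A 0" if "0 < n" for n
    using that by (simp add: upt_conv_Cons)
  show "A \<in> paths (avoid_tree L b) \<longleftrightarrow> A \<in> {A. of_bool (A 0) \<noteq> b}"
  proof
    assume "A \<in> paths (avoid_tree L b)"
    then have "map A [0..<Suc L] \<in> avoid_tree L b" by (simp add: paths_def del: upt_Suc)
    with hd_map[of "Suc L"] show "A \<in> {A. of_bool (A 0) \<noteq> b}"
      by (simp add: avoid_tree_def del: upt_Suc)
  next
    assume "A \<in> {A. of_bool (A 0) \<noteq> b}"
    with hd_map show "A \<in> paths (avoid_tree L b)"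
      unfolding paths_def avoid_tree_def by (auto simp del: upt_Suc)
  qed
qed

lemma tree_measure_avoid_tree: "b \<le> 1 \<Longrightarrow> tree_measure (avoid_tree L b) = 1/2"
proof -
  assume "b \<le> 1"
  then have "{A. of_bool (A 0) \<noteq> b} = {A. A 0 = (b = 0)}" by auto
  then show ?thesis
    unfolding tree_measure_def paths_avoid_tree using measure_first_bit by metis
qed

lemma diag_tree_eq:
  "diag_tree fe e = {s. first_nonzero (decision fe (pair e (pair 3 4))) (length s) = 0 \<or>
      (s \<noteq> [] \<and> of_bool (hd s) \<noteq> first_nonzero (decision fe (pair e (pair 3 4))) (length s) - 1)}"
    (is "_ = {s. ?d (length s) = 0 \<or> _}")
proof (rule set_eqI)
  fix s :: "bool list"
  have "s \<in> diag_tree fe e \<longleftrightarrow> ?d (length s) = 0 \<or> pfst (scode s - 1) \<noteq> ?d (length s) - 1"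
    by (simp add: diag_tree_def diag_member_def scode_length_scode)
  then show "s \<in> diag_tree fe e \<longleftrightarrow>
      s \<in> {s. ?d (length s) = 0 \<or> (s \<noteq> [] \<and> of_bool (hd s) \<noteq> ?d (length s) - 1)}"
    by (cases s) simp_all
qed

lemma diag_tree_undecided:
  "\<forall>L. decision fe (pair e (pair 3 4)) L = 0 \<Longrightarrow> diag_tree fe e = UNIV"
  unfolding diag_tree_eq by (simp add: first_nonzero_eq_0)

lemma diag_tree_decided:
  assumes "decision fe (pair e (pair 3 4)) L \<noteq> 0" "\<forall>L' < L. decision fe (pair e (pair 3 4)) L' = 0"
  shows "diag_tree fe e = avoid_tree L (decision fe (pair e (pair 3 4)) L - 1)"
  unfolding diag_tree_eq avoid_tree_def first_nonzero_least[OF assms] using assms(1)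
  by (auto simp: not_less)

lemma decision_le_2: "decision fe x L \<le> 2"
  by (simp add: decision_def)

lemma diag_tree_is_tree_positive: "is_tree (diag_tree fe e) \<and> tree_measure (diag_tree fe e) > 0"
proof (cases "\<exists>L. decision fe (pair e (pair 3 4)) L \<noteq> 0")
  case True
  define L where "L = (LEAST L. decision fe (pair e (pair 3 4)) L \<noteq> 0)"
  have "decision fe (pair e (pair 3 4)) L \<noteq> 0" "\<forall>L' < L. decision fe (pair e (pair 3 4)) L' = 0"
    using True unfolding L_def by (auto intro: LeastI_ex dest: not_less_Least)
  moreover have "decision fe (pair e (pair 3 4)) L - 1 \<le> 1"
    using decision_le_2[of fe "pair e (pair 3 4)" L] by simp
  ultimately show ?thesis
    by (simp add: diag_tree_decided is_tree_avoid_tree tree_measure_avoid_tree)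
next
  case False
  then show ?thesis
    using coin_space.prob_space
    by (simp add: diag_tree_undecided is_tree_def tree_measure_def paths_def)
qed

definition value_events :: "nat \<Rightarrow> nat \<Rightarrow> nat \<Rightarrow> (nat \<Rightarrow> bool) set" where
  "value_events c L b = {A. search L c 0 L (bits_code (map A [0..<L])) = Suc b}"

lemma value_events_sets: "value_events c L b \<in> sets coin"
  unfolding value_events_def by (rule bits_code_sets)

lemma measure_value_events: "measure coin (value_events c L b) = value_count c L b / 2 ^ L"
  unfolding value_events_def value_count_def by (rule measure_bits_code)

lemma value_events_subset: "value_events (enc p) L b \<subseteq> {A. eval A p 0 b}"
proof
  fix A assume "A \<in> value_events (enc p) L b"
  then have "search L (enc p) 0 L (bits_code (map A [0..<L])) = Suc b"
    by (simp add: value_events_def)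
  from search_sound[OF this codes_prefix_bits_code] show "A \<in> {A. eval A p 0 b}" by simp
qed

lemma Union_value_events: "(\<Union>L. value_events (enc p) L b) = {A. eval A p 0 b}"
proof
  show "{A. eval A p 0 b} \<subseteq> (\<Union>L. value_events (enc p) L b)"
  proof
    fix A assume "A \<in> {A. eval A p 0 b}"
    then obtain K where "\<forall>k L i. K \<le> k \<longrightarrow> K \<le> L \<longrightarrow> codes_prefix A L i \<longrightarrow>
        search k (enc p) 0 L i = Suc b"
      using search_complete by blast
    then have "A \<in> value_events (enc p) K b"
      using codes_prefix_bits_code by (simp add: value_events_def)
    then show "A \<in> (\<Union>L. value_events (enc p) L b)" by blast
  qed
qed (use value_events_subset in blast)

lemma value_events_tendsto:
  "(\<lambda>L. measure coin (value_events (enc p) L b)) \<longlonglongrightarrow> measure coin {A. eval A p 0 b}"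
proof -
  have "value_events (enc p) L b \<subseteq> value_events (enc p) (Suc L) b" for L
  proof
    fix A assume "A \<in> value_events (enc p) L b"
    then have "search L (enc p) 0 L (bits_code (map A [0..<L])) = Suc b"
      by (simp add: value_events_def)
    from search_mono[OF this codes_prefix_bits_code codes_prefix_bits_code, of "Suc L" "Suc L"]
    show "A \<in> value_events (enc p) (Suc L) b" by (simp add: value_events_def)
  qed
  then have "incseq (\<lambda>L. value_events (enc p) L b)" by (rule incseq_SucI)
  moreover have "range (\<lambda>L. value_events (enc p) L b) \<subseteq> sets coin"
    using value_events_sets by blast
  ultimately show ?thesis
    unfolding Union_value_events[symmetric] by (rule coin_space.finite_Lim_measure_incseq[rotated])
qed

lemma eval_value_sets: "{A. eval A p 0 b} \<in> sets coin"
  unfolding Union_value_events[symmetric]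
  by (rule sets.countable_UN) (use value_events_sets in blast)

lemma codes_prefix_False: "codes_prefix (\<lambda>_. False) L 0"
  by (simp add: codes_prefix_def bit_at_def)

lemma approx_output_sound: "approx_output (enc F) x L = Suc y \<Longrightarrow> eval0 F x y"
proof -
  assume "approx_output (enc F) x L = Suc y"
  then have "search L (enc F) x L 0 = Suc y" by (simp add: approx_output_def)
  from search_sound[OF this codes_prefix_False] show ?thesis by (simp add: eval0_def)
qed

lemma approx_output_converges: "eval0 F x y \<Longrightarrow> \<exists>K. \<forall>L\<ge>K. approx_output (enc F) x L = Suc y"
proof -
  assume "eval0 F x y"
  then obtain K where "\<forall>k L i. K \<le> k \<longrightarrow> K \<le> L \<longrightarrow> codes_prefix (\<lambda>_. False) L i \<longrightarrow>
      search k (enc F) x L i = Suc y"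
    using search_complete unfolding eval0_def by blast
  then have "\<forall>L\<ge>K. search L (enc F) x L 0 = Suc y" using codes_prefix_False by blast
  then show ?thesis unfolding approx_output_def by blast
qed

lemma decision_eq:
  assumes "eval0 F x (pair s (enc p))" "decision (enc F) x L \<noteq> 0"
  shows "decision (enc F) x L =
    (if 2 ^ L < 4 * value_count (enc p) L 0 then 1
     else if 2 ^ L < 4 * value_count (enc p) L 1 then 2 else 0)"
proof -
  have "approx_output (enc F) x L \<noteq> 0"
  proof
    assume "approx_output (enc F) x L = 0"
    with assms(2) show False by (simp add: decision_def)
  qed
  then obtain y where y: "approx_output (enc F) x L = Suc y" using not0_implies_Suc by blast
  from approx_output_sound[OF y] assms(1) have "y = pair s (enc p)"
    unfolding eval0_def by (rule eval_deterministic)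
  with y show ?thesis by (simp add: decision_def)
qed

lemma measure_value_events_gt:
  "1/4 < measure coin (value_events c L b) \<longleftrightarrow> 2 ^ L < 4 * value_count c L b"
proof -
  have "1/4 < real (value_count c L b) / 2 ^ L \<longleftrightarrow> 2 ^ L < 4 * real (value_count c L b)"
    by (simp add: field_simps)
  also have "\<dots> \<longleftrightarrow> 2 ^ L < 4 * value_count c L b"
    by (metis of_nat_less_iff of_nat_mult of_nat_numeral of_nat_power)
  finally show ?thesis by (simp only: measure_value_events)
qed

lemma decision_likely_value:
  assumes "eval0 F x (pair s (enc p))" "decision (enc F) x L \<noteq> 0"
  shows "1/4 < measure coin (value_events (enc p) L (decision (enc F) x L - 1))"
proof -
  consider "2 ^ L < 4 * value_count (enc p) L 0" "decision (enc F) x L = 1"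
    | "2 ^ L < 4 * value_count (enc p) L 1" "decision (enc F) x L = 2"
    using assms(2) decision_eq[OF assms] by (auto split: if_splits)
  then show ?thesis unfolding measure_value_events_gt by cases simp_all
qed

lemma decision_eventually:
  assumes "eval0 F x (pair s (enc p))" "1/4 < measure coin {A. eval A p 0 b}" "b \<le> 1"
  shows "\<exists>L. decision (enc F) x L \<noteq> 0"
proof -
  obtain L1 where "\<forall>L\<ge>L1. 2 ^ L < 4 * value_count (enc p) L b"
    using order_tendstoD(1)[OF value_events_tendsto assms(2)]
    unfolding measure_value_events_gt eventually_sequentially by blast
  moreover obtain K where "\<forall>L\<ge>K. approx_output (enc F) x L = Suc (pair s (enc p))"
    using approx_output_converges[OF assms(1)] by blast
  ultimately have out: "approx_output (enc F) x (max K L1) = Suc (pair s (enc p))"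
    and large: "2 ^ max K L1 < 4 * value_count (enc p) (max K L1) b"
    by simp_all
  from assms(3) consider "b = 0" | "b = 1" by linarith
  then have "decision (enc F) x (max K L1) \<noteq> 0"
    by cases (use out large in \<open>simp_all add: decision_def\<close>)
  then show ?thesis ..
qed

lemma likely_value:
  assumes "3/4 \<le> measure coin P" "\<forall>A \<in> P. \<exists>b\<le>1. eval A p 0 b"
  shows "\<exists>b\<le>1. 1/4 < measure coin {A. eval A p 0 b}"
proof -
  have "P \<subseteq> {A. eval A p 0 0} \<union> {A. eval A p 0 1}"
    using assms(2) le_Suc_eq by fastforce
  then have "measure coin P \<le> measure coin ({A. eval A p 0 0} \<union> {A. eval A p 0 1})"
    by (rule coin_space.finite_measure_mono) (intro sets.Un eval_value_sets)
  also have "\<dots> \<le> measure coin {A. eval A p 0 0} + measure coin {A. eval A p 0 1}"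
    by (rule measure_subadditive) (simp_all add: eval_value_sets coin_space.emeasure_eq_measure)
  finally have sum: "3/4 \<le> measure coin {A. eval A p 0 0} + measure coin {A. eval A p 0 1}"
    using assms(1) by linarith
  show ?thesis
  proof (cases "1/4 < measure coin {A. eval A p 0 0}")
    case False
    with sum have "1/4 < measure coin {A. eval A p 0 1}" by linarith
    then show ?thesis by blast
  qed blast
qed

lemma eval_of_computes_with_oracle: "computes_with_oracle p A X \<Longrightarrow> eval A p 0 (of_bool (X 0))"
  by (simp add: computes_with_oracle_def of_bool_def)

lemma diag_tree_defeats:
  assumes F: "eval0 F (pair e (pair 3 4)) (pair s (enc p))"
    and S: "tree_measure S \<ge> 3/4"
    and reduction: "\<forall>A \<in> paths S. \<exists>X \<in> paths (diag_tree (enc F) e). computes_with_oracle p A X"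
  shows False
proof -
  let ?d = "decision (enc F) (pair e (pair 3 4))"
  have reduces: "\<exists>X \<in> paths (diag_tree (enc F) e). eval A p 0 (of_bool (X 0))"
    if "A \<in> paths S" for A
    using reduction that eval_of_computes_with_oracle by blast
  then have "\<forall>A \<in> paths S. \<exists>b\<le>1. eval A p 0 b" by (meson of_bool_less_eq_one)
  then obtain b where b: "b \<le> 1" "1/4 < measure coin {A. eval A p 0 b}"
    using likely_value S unfolding tree_measure_def by blast
  have "\<exists>L. ?d L \<noteq> 0" by (rule decision_eventually[OF F b(2,1)])
  define L where "L = (LEAST L. ?d L \<noteq> 0)"
  have decided: "?d L \<noteq> 0" "\<forall>L' < L. ?d L' = 0"
    using \<open>\<exists>L. ?d L \<noteq> 0\<close> unfolding L_def by (auto intro: LeastI_ex dest: not_less_Least)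
  then have T: "paths (diag_tree (enc F) e) = {A. of_bool (A 0) \<noteq> ?d L - 1}"
    by (simp add: diag_tree_decided paths_avoid_tree)
  let ?E = "value_events (enc p) L (?d L - 1)"
  have "paths S \<subseteq> space coin - ?E"
  proof
    fix A assume "A \<in> paths S"
    with reduces T obtain X :: "nat \<Rightarrow> bool"
      where "eval A p 0 (of_bool (X 0))" "of_bool (X 0) \<noteq> ?d L - 1" by blast
    then have "A \<notin> ?E" using value_events_subset eval_deterministic by blast
    then show "A \<in> space coin - ?E" by simp
  qed
  then have "measure coin (paths S) \<le> measure coin (space coin - ?E)"
    by (rule coin_space.finite_measure_mono[OF _ sets.compl_sets[OF value_events_sets]])
  also have "\<dots> = 1 - measure coin ?E" by (rule coin_space.prob_compl[OF value_events_sets])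
  finally show False
    using decision_likely_value[OF F decided(1)] S unfolding tree_measure_def by linarith
qed

theorem proposition4p5:
  shows "\<not> (\<exists>F::recf. \<forall>pT T a b.
            decides pT T \<and> is_tree T \<and> tree_measure T > 0 \<and> 0 < a \<and> a < b \<longrightarrow>
            (\<exists>pS pPhi S. eval0 F (prod_encode (enc pT, prod_encode (a, b)))
                                (prod_encode (enc pS, enc pPhi))
                \<and> decides pS S \<and> is_tree S
                \<and> tree_measure S \<ge> real a / real b
                \<and> (\<forall>A \<in> paths S. \<exists>X \<in> paths T. computes_with_oracle pPhi A X)))"
  apply (intro notI, elim exE)
  subgoal premises procedure for F
  proof -
    obtain p where "decides p (diag_tree (enc F) (enc p))" using diag_tree_decidable by blast
    with diag_tree_is_tree_positive
    have "decides p (diag_tree (enc F) (enc p)) \<and> is_tree (diag_tree (enc F) (enc p)) \<and>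
        tree_measure (diag_tree (enc F) (enc p)) > 0 \<and> 0 < (3::nat) \<and> (3::nat) < 4"
      by simp
    with procedure obtain pS pPhi S where
      F: "eval0 F (pair (enc p) (pair 3 4)) (pair (enc pS) (enc pPhi))"
      and S: "tree_measure S \<ge> real 3 / real 4"
      and reduction:
        "\<forall>A \<in> paths S. \<exists>X \<in> paths (diag_tree (enc F) (enc p)). computes_with_oracle pPhi A X"
      by blast
    from S have "tree_measure S \<ge> 3/4" by simp
    with F reduction show False by (intro diag_tree_defeats)
  qed
  done

end
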